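(* In the setting described in the context, assume $\gamma$ avoids the origin. Then the angle $\alpha$ satisfies $\alpha(0)=\pi/2$, $\alpha(-\beta)=\alpha(\beta)\in\{\pi/2,\,3\pi/2\}$, and $\pi/2\le\alpha(t)\le 3\pi/2$ for all $t\in[0,\beta]$.
   Context: Setting: $\mathbb{R}^2$ in polar coordinates $(r,\theta)$ with Riemannian metric $ds^2=dr^2+h(r)^2d\theta^2$ ($h$ smooth, $h>0$ on $(0,\infty)$) and smooth positive radial density $f(r)=e^{\psi(r)}$; area and length are weighted by $f$. Let $A$ be an isoperimetric region (it minimizes weighted length of boundary among regions of the same weighted area) which is spherically symmetrized: for each $r>0$, $A\cap\{|x|=r\}$ is empty, the whole circle, or a closed arc of that circle symmetric about the ray $\theta=0$. Let $\gamma:[-\beta,\beta]\to\mathbb{R}^2$ be a smooth, counterclockwise, arclength (with respect to $ds$) parametrization of the component of $\partial A$ farthest from the origin, such that $\gamma(0)$ and $\gamma(\beta)=\gamma(-\beta)$ lie on the $x$-axis, $\gamma$ is symmetric about the $x$-axis, lies above the $x$-axis on $(0,\beta)$ and below it on $(-\beta,0)$, and $\gamma(0)$ is a point of $\gamma$ farthest from the origin. Write $\gamma(t)=(r(t),\theta(t))$. Let $\hat r(t),\hat\theta(t)$ be the orthonormal basis of the tangent space at $\gamma(t)$ in the radial and angular directions, and let $\alpha(t)$ be the counterclockwise angle, measured in $ds$, from $\hat r(t)$ to $\gamma'(t)$, chosen continuously in $t$ with $\alpha(0)\in[0,2\pi)$; thus $r'=\cos\alpha$, $h(r)\theta'=\sin\alpha$.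 *)

theory Defs
  imports "HOL-Complex_Analysis.Complex_Analysis"
begin

text \<open>The plane is modelled as the type complex; polar radius = norm, and
  the point with polar coordinates (r, theta) is rcis r theta.\<close>

definition Cinf_on :: "real set \<Rightarrow> (real \<Rightarrow> 'a::real_normed_vector) \<Rightarrow> bool" where
  "Cinf_on S g \<longleftrightarrow> (\<exists>D. D 0 = g \<and>
      (\<forall>n. \<forall>t\<in>S. (D n has_vector_derivative D (Suc n) t) (at t within S)))"

text \<open>Density of the weighted Riemannian area f dA_g with respect to Lebesgue
  measure in Cartesian coordinates: dA_g = h(r) dr dtheta = (h(r)/r) dx dy.\<close>
definition wdens :: "(real \<Rightarrow> real) \<Rightarrow> (real \<Rightarrow> real) \<Rightarrow> complex \<Rightarrow> real" where
  "wdens h f z = f (norm z) * h (norm z) / norm z"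

definition wArea :: "(real \<Rightarrow> real) \<Rightarrow> (real \<Rightarrow> real) \<Rightarrow> complex set \<Rightarrow> ennreal" where
  "wArea h f E = set_nn_integral lborel E (\<lambda>z. ennreal (wdens h f z))"

text \<open>Length, in the metric dr^2 + h(r)^2 dtheta^2, of the tangent vector v
  (Euclidean components) at the point z \<noteq> 0.\<close>
definition gnorm :: "(real \<Rightarrow> real) \<Rightarrow> complex \<Rightarrow> complex \<Rightarrow> real" where
  "gnorm h z v = sqrt ((Re (v * cnj z) / norm z)\<^sup>2
                     + (h (norm z) * Im (v * cnj z) / (norm z)\<^sup>2)\<^sup>2)"

definition cdiv :: "(complex \<Rightarrow> complex) \<Rightarrow> complex \<Rightarrow> real" where
  "cdiv Y z = Re (frechet_derivative Y (at z) 1) + Im (frechet_derivative Y (at z) \<i>)"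

definition test_field :: "(real \<Rightarrow> real) \<Rightarrow> (complex \<Rightarrow> complex) \<Rightarrow> bool" where
  "test_field h X \<longleftrightarrow>
     (\<exists>K. compact K \<and> 0 \<notin> K \<and> (\<forall>z. z \<notin> K \<longrightarrow> X z = 0)) \<and>
     (\<exists>X'. (\<forall>z. (X has_derivative X' z) (at z)) \<and>
           continuous_on UNIV (\<lambda>z. X' z 1) \<and> continuous_on UNIV (\<lambda>z. X' z \<i>)) \<and>
     (\<forall>z. z \<noteq> 0 \<longrightarrow> gnorm h z (X z) \<le> 1)"

text \<open>Weighted perimeter: sup over test fields X of the integral over E of the
  weighted divergence div_{f}(X) d(weighted area), which in Cartesian
  coordinates is the Euclidean divergence of (wdens * X).\<close>
definition wPerim :: "(real \<Rightarrow> real) \<Rightarrow> (real \<Rightarrow> real) \<Rightarrow> complex set \<Rightarrow> ereal" where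
  "wPerim h f E = (SUP X \<in> {X. test_field h X}.
      ereal (set_lebesgue_integral lborel E
               (cdiv (\<lambda>w. complex_of_real (wdens h f w) * X w))))"

definition isoperimetric :: "(real \<Rightarrow> real) \<Rightarrow> (real \<Rightarrow> real) \<Rightarrow> complex set \<Rightarrow> bool" where
  "isoperimetric h f A \<longleftrightarrow> A \<in> sets lebesgue \<and> wArea h f A < \<infinity> \<and>
     (\<forall>E \<in> sets lebesgue. wArea h f E = wArea h f A \<longrightarrow> wPerim h f A \<le> wPerim h f E)"

definition sph_symmetrized :: "complex set \<Rightarrow> bool" where
  "sph_symmetrized A \<longleftrightarrow> (\<forall>r>0. A \<inter> sphere 0 r = {} \<or> sphere 0 r \<subseteq> A \<or>
      (\<exists>\<phi>. 0 \<le> \<phi> \<and> \<phi> < pi \<and> A \<inter> sphere 0 r = {rcis r \<theta> | \<theta>. \<bar>\<theta>\<bar> \<le> \<phi>}))"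

end

theory Submission
  imports Defs
begin

text \<open>Write \<rho> = |\<gamma>|; the angle relation gives \<rho>' = cos \<alpha>. Since \<rho> is maximal at 0 and,
  by closedness and reflection symmetry, even about \<beta>, cos \<alpha> vanishes at 0 and at \<beta>.
  On (0, \<beta>) one has \<rho>' \<le> 0: if \<rho> increased strictly at t0, the intermediate value
  theorem (\<rho>(0) being maximal) would give an earlier time s with \<rho>(s) = \<rho>(t0); spherical
  symmetrization puts the whole circular arc between \<gamma>(s) and \<gamma>(t0) into the boundary,
  hence into the component traced by \<gamma>, and then points of \<gamma> of the same radius
  accumulate at t0, contradicting strict monotonicity. Thus cos \<alpha> \<le> 0 on [0, \<beta>], which
  traps the continuous angle in [\<pi>/2, 3\<pi>/2] once \<alpha>(0) = \<pi>/2. The latter needs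
  sin \<alpha>(0) \<ge> 0, i.e. that \<gamma>(0) lies on the positive real axis: by the counterclockwise
  orientation a real point x inside the curve has winding number 1, and splitting \<gamma> into its
  halves in the closed upper and lower half planes shows that this forces \<gamma>(\<beta>) < x < \<gamma>(0).\<close>

subsection \<open>Radial derivative and angles\<close>

lemma Cinf_on_UNIV_imp_C1:
  fixes \<gamma> :: "real \<Rightarrow> 'a::real_normed_vector"
  assumes "Cinf_on UNIV \<gamma>"
  obtains \<gamma>' where "\<And>t. (\<gamma> has_vector_derivative \<gamma>' t) (at t)" "continuous_on UNIV \<gamma>'"
proof -
  obtain D where "D 0 = \<gamma>" and D: "\<And>n t. (D n has_vector_derivative D (Suc n) t) (at t)"
    using assms unfolding Cinf_on_def by auto
  then have "\<And>t. (\<gamma> has_vector_derivative D 1 t) (at t)" by (metis One_nat_def)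
  moreover have "continuous_on UNIV (D 1)"
    using D[of 1] by (intro continuous_at_imp_continuous_on ballI has_vector_derivative_continuous)
  ultimately show ?thesis by (rule that)
qed

lemma vector_derivative_periodic:
  assumes period: "\<forall>t. \<gamma> (t + p) = \<gamma> t" and \<gamma>': "\<And>t. (\<gamma> has_vector_derivative \<gamma>' t) (at t)"
  shows "\<gamma>' (t + p) = \<gamma>' t"
proof -
  have "((\<lambda>t. t + p) has_vector_derivative 1) (at t)"
    by (auto intro!: derivative_eq_intros simp flip: has_real_derivative_iff_has_vector_derivative)
  from vector_diff_chain_at[OF this \<gamma>'] have "(\<gamma> has_vector_derivative \<gamma>' (t + p)) (at t)"
    using period by (simp add: o_def)
  then show ?thesis by (rule vector_derivative_unique_at[OF _ \<gamma>'])
qed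

lemma has_real_derivative_norm_polar:
  fixes g :: "real \<Rightarrow> complex"
  assumes g': "(g has_vector_derivative Complex c k * sgn (g t)) (at t)" and nz: "g t \<noteq> 0"
  shows "((\<lambda>t. norm (g t)) has_real_derivative c) (at t)"
proof -
  have "((\<lambda>t. norm (g t)) has_derivative (\<lambda>s. inner (s *\<^sub>R (Complex c k * sgn (g t))) (sgn (g t)))) (at t)"
    using has_derivative_compose[OF g'[unfolded has_vector_derivative_def] has_derivative_norm[OF nz]] .
  moreover have "inner (Complex c k * u) u = c" if "norm u = 1" for u :: complex
  proof -
    have "c * ((Re u)\<^sup>2 + (Im u)\<^sup>2) = c" using that by (simp add: cmod_power2 flip: cmod_power2)
    then show ?thesis by (simp add: inner_complex_def algebra_simps power2_eq_square)
  qed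
  ultimately have "((\<lambda>t. norm (g t)) has_derivative (\<lambda>s. s * c)) (at t)" using nz by (simp add: norm_sgn)
  then show ?thesis by (simp add: has_real_derivative_iff_has_vector_derivative has_vector_derivative_def)
qed

lemma has_real_derivative_zero_if_symmetric:
  fixes f :: "real \<Rightarrow> real"
  assumes f': "(f has_real_derivative D) (at c)" and "d > 0"
    and symm: "\<And>s. \<bar>s\<bar> < d \<Longrightarrow> f (c + s) = f (c - s)"
  shows "D = 0"
proof -
  have f'0: "(f has_real_derivative D) (at (c + 0))" "(f has_real_derivative D) (at (c - 0))"
    using f' by simp_all
  have plus: "((\<lambda>s. f (c + s)) has_real_derivative D * 1) (at 0)"
    by (rule DERIV_chain2[where g="\<lambda>s. c + s" and x=0, OF f'0(1)]) (auto intro!: derivative_eq_intros)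
  have minus: "((\<lambda>s. f (c - s)) has_real_derivative D * (-1)) (at 0)"
    by (rule DERIV_chain2[where g="\<lambda>s. c - s" and x=0, OF f'0(2)]) (auto intro!: derivative_eq_intros)
  have "((\<lambda>s. f (c + s)) has_real_derivative D * (-1)) (at 0)"
    by (rule has_field_derivative_transform_within_open[OF minus, of "ball 0 d"]) (use assms in auto)
  from DERIV_unique[OF plus this] show ?thesis by simp
qed

lemma Im_derivative_nonneg_leaving_axis:
  fixes g :: "real \<Rightarrow> complex"
  assumes g': "(g has_vector_derivative v) (at t)" and axis: "Im (g t) = 0"
    and "d > 0" and up: "\<forall>s\<in>{t<..<t + d}. Im (g s) > 0"
  shows "Im v \<ge> 0"
proof (rule ccontr)
  assume "\<not> Im v \<ge> 0"
  then obtain e where "e > 0" and dec: "\<And>h. 0 < h \<Longrightarrow> h < e \<Longrightarrow> Im (g (t + h)) < Im (g t)"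
    using DERIV_neg_dec_right[OF has_field_derivative_Im[OF g']] by (metis not_le)
  define h where "h = min e d / 2"
  have "Im (g (t + h)) < 0" using dec[of h] axis \<open>e > 0\<close> \<open>d > 0\<close> by (simp add: h_def)
  moreover have "Im (g (t + h)) > 0" using up \<open>e > 0\<close> \<open>d > 0\<close> by (simp add: h_def)
  ultimately show False by simp
qed

lemma periodic_symmetric_curve_radius_even:
  fixes \<gamma> :: "real \<Rightarrow> complex"
  assumes period: "\<forall>t. \<gamma> (t + 2 * \<beta>) = \<gamma> t" and symm: "\<forall>t\<in>{-\<beta>..\<beta>}. \<gamma> (-t) = cnj (\<gamma> t)"
    and s: "\<bar>s\<bar> < \<beta>"
  shows "norm (\<gamma> (\<beta> + s)) = norm (\<gamma> (\<beta> - s))"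
proof (cases "s \<ge> 0")
  case True
  have "\<gamma> (\<beta> + s) = \<gamma> (- (\<beta> - s))" using period[rule_format, of "s - \<beta>"] by simp
  also have "\<dots> = cnj (\<gamma> (\<beta> - s))" using symm[rule_format, of "\<beta> - s"] s True by simp
  finally show ?thesis by simp
next
  case False
  have "- (\<beta> + s) + 2 * \<beta> = \<beta> - s" by simp
  then have "\<gamma> (\<beta> - s) = \<gamma> (- (\<beta> + s))" using period[rule_format, of "- (\<beta> + s)"] by metis
  also have "\<dots> = cnj (\<gamma> (\<beta> + s))" using symm[rule_format, of "\<beta> + s"] s False by simp
  finally show ?thesis by simp
qed

lemma angle_eq_pi_half:
  assumes "cos a = 0" "sin a \<ge> 0" "0 \<le> a" "a < 2 * pi"
  shows "a = pi / 2"
proof -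
  have "a \<le> pi" using sin_lt_zero[of a] assms by linarith
  then show ?thesis using cos_inj_pi[of a "pi / 2"] assms by simp
qed

lemma continuous_angle_cos_nonpos_range:
  fixes \<alpha> :: "real \<Rightarrow> real"
  assumes cont: "continuous_on {0..b} \<alpha>" and start: "\<alpha> 0 = pi / 2"
    and cos_nonpos: "\<forall>t\<in>{0..b}. cos (\<alpha> t) \<le> 0" and t: "t \<in> {0..b}"
  shows "pi / 2 \<le> \<alpha> t \<and> \<alpha> t \<le> 3 * pi / 2"
proof
  have conn: "connected (\<alpha> ` {0..t})"
    using t by (intro connected_continuous_image continuous_on_subset[OF cont]) auto
  have mem: "pi / 2 \<in> \<alpha> ` {0..t}" "\<alpha> t \<in> \<alpha> ` {0..t}"
    using t start by (auto intro: image_eqI[of _ _ 0])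
  have no_pos_cos: "\<not> cos y > 0" if "y \<in> \<alpha> ` {0..t}" for y
    using that cos_nonpos t by force
  show "pi / 2 \<le> \<alpha> t"
  proof (rule ccontr)
    assume "\<not> pi / 2 \<le> \<alpha> t"
    then have "max (\<alpha> t) 0 \<in> \<alpha> ` {0..t}"
      by (intro connectedD_interval[OF conn mem(2) mem(1)]) (use pi_gt_zero in \<open>auto simp: max_def\<close>)
    moreover have "cos (max (\<alpha> t) 0) > 0"
      by (intro cos_gt_zero_pi) (use \<open>\<not> pi / 2 \<le> \<alpha> t\<close> pi_gt_zero in \<open>auto simp: max_def\<close>)
    ultimately show False using no_pos_cos by blast
  qed
  show "\<alpha> t \<le> 3 * pi / 2"
  proof (rule ccontr)
    assume "\<not> \<alpha> t \<le> 3 * pi / 2"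
    then have "min (\<alpha> t) (2 * pi) \<in> \<alpha> ` {0..t}"
      by (intro connectedD_interval[OF conn mem(1) mem(2)]) (use pi_gt_zero in \<open>auto simp: min_def\<close>)
    moreover have "cos (min (\<alpha> t) (2 * pi) - 2 * pi) > 0"
      by (intro cos_gt_zero_pi) (use \<open>\<not> \<alpha> t \<le> 3 * pi / 2\<close> pi_gt_zero in \<open>auto simp: min_def\<close>)
    ultimately show False using no_pos_cos by (metis cos_periodic diff_add_cancel)
  qed
qed

lemma cos_eq_zero_in_half_turns:
  assumes "cos a = 0" "pi / 2 \<le> a" "a \<le> 3 * pi / 2"
  shows "a = pi / 2 \<or> a = 3 * pi / 2"
proof (cases "a \<le> pi")
  case True
  then show ?thesis using cos_inj_pi[of a "pi / 2"] assms by simp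
next
  case False
  then have "a - pi = pi / 2" using cos_inj_pi[of "a - pi" "pi / 2"] assms by simp
  then show ?thesis by simp
qed

lemma polar_angles_eq_mod_2pi:
  assumes "Complex (cos a) (r * sin a / c) * u = Complex (cos b) (r * sin b / c) * u"
    and "r \<noteq> 0" "c \<noteq> 0" "u \<noteq> 0"
  shows "\<exists>k::int. a = b + 2 * pi * of_int k"
proof -
  have "Complex (cos a) (r * sin a / c) = Complex (cos b) (r * sin b / c)"
    using assms(1,4) by simp
  then have "cos a = cos b" "sin a = sin b" using assms(2,3) by auto
  then show ?thesis using sin_cos_eq_iff by metis
qed

subsection \<open>Spherically symmetrized sets\<close>

definition Re_upclosed_on_circles :: "complex set \<Rightarrow> bool" where
  "Re_upclosed_on_circles A \<longleftrightarrow>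
     (\<forall>z\<in>A. \<forall>z'. norm z' = norm z \<and> Re z \<le> Re z' \<longrightarrow> z' \<in> A)"

lemma sph_symmetrized_imp_Re_upclosed:
  assumes "sph_symmetrized A"
  shows "Re_upclosed_on_circles A"
  unfolding Re_upclosed_on_circles_def
proof (intro ballI allI impI, elim conjE)
  fix z z' assume z: "z \<in> A" and nz': "norm z' = norm z" and Re: "Re z \<le> Re z'"
  show "z' \<in> A"
  proof (cases "z = 0")
    case True then show ?thesis using z nz' by simp
  next
    case False
    define r where "r = norm z"
    have r: "r > 0" using False r_def by simp
    have zs: "z \<in> sphere 0 r" "z' \<in> sphere 0 r" using nz' r_def by auto
    from assms[unfolded sph_symmetrized_def, rule_format, OF r]
    consider "A \<inter> sphere 0 r = {}" | "sphere 0 r \<subseteq> A"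
      | \<phi> where "0 \<le> \<phi>" "\<phi> < pi" "A \<inter> sphere 0 r = {rcis r \<theta> | \<theta>. \<bar>\<theta>\<bar> \<le> \<phi>}" by blast
    then show ?thesis
    proof cases
      case 1 then show ?thesis using zs z by blast
    next
      case 2 then show ?thesis using zs by blast
    next
      case 3
      then obtain \<theta> where th: "z = rcis r \<theta>" "\<bar>\<theta>\<bar> \<le> \<phi>" using zs z by blast
      have z'_polar: "z' = rcis r (Arg z')" using rcis_cmod_Arg[of z'] nz' r_def by simp
      have "cos \<phi> \<le> cos \<bar>\<theta>\<bar>" using th(2) 3(1,2) by (subst cos_mono_le_eq) auto
      then have "r * cos \<phi> \<le> r * cos \<bar>\<theta>\<bar>" using r by simp
      also have "\<dots> = Re z" using th by simp
      also have "\<dots> \<le> Re z'" by (fact Re)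
      also have "\<dots> = r * cos \<bar>Arg z'\<bar>" by (subst z'_polar) simp
      finally have "cos \<phi> \<le> cos \<bar>Arg z'\<bar>" using r by simp
      moreover have "\<bar>Arg z'\<bar> \<le> pi" using Arg_bounded[of z'] by auto
      ultimately have "\<bar>Arg z'\<bar> \<le> \<phi>" using 3(1,2) cos_mono_le_eq[of \<phi> "\<bar>Arg z'\<bar>"] by auto
      then show ?thesis using 3(3) z'_polar by blast
    qed
  qed
qed

text \<open>Rotating points of A near q by the unit factor w / q moves them towards larger real part.\<close>
lemma Re_upclosed_closure_mono:
  assumes A: "Re_upclosed_on_circles A" and q: "q \<in> closure A"
    and nw: "norm w = norm q" and lt: "Re q < Re w"
  shows "w \<in> closure A"
proof -
  have q0: "q \<noteq> 0" using nw lt abs_Re_le_cmod[of w] abs_Re_le_cmod[of q] by auto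
  define u where "u = w / q"
  have nu: "norm u = 1" and wu: "w = q * u" using nw q0 by (auto simp: u_def norm_divide)
  define U where "U = {x. Re x < Re (x * u)}"
  have "open U" unfolding U_def by (intro open_Collect_less continuous_intros)
  moreover have "q \<in> U" using wu lt by (simp add: U_def)
  ultimately have "q \<in> closure (U \<inter> A)" using q open_Int_closure_subset by blast
  moreover have "(\<lambda>x. x * u) ` (U \<inter> A) \<subseteq> A"
    using A nu by (auto simp: U_def Re_upclosed_on_circles_def norm_mult less_imp_le)
  then have "(\<lambda>x. x * u) ` closure (U \<inter> A) \<subseteq> closure A"
    using closure_subset by (intro image_closure_subset continuous_intros) auto
  ultimately show ?thesis using wu by blast
qed

lemma Re_upclosed_neg_complement:
  assumes A: "Re_upclosed_on_circles A"
  shows "Re_upclosed_on_circles (uminus ` (- A))"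
  unfolding Re_upclosed_on_circles_def
proof (intro ballI allI impI, elim conjE)
  fix z z' assume "z \<in> uminus ` (- A)" "norm z' = norm z" "Re z \<le> Re z'"
  then have "- z \<notin> A" "norm (- z) = norm (- z')" "Re (- z') \<le> Re (- z)" by auto
  then have "- z' \<notin> A" using A unfolding Re_upclosed_on_circles_def by blast
  then show "z' \<in> uminus ` (- A)" by (intro image_eqI[of _ uminus "- z'"]) auto
qed

lemma Re_upclosed_frontier_between:
  assumes A: "Re_upclosed_on_circles A"
    and p: "p \<in> frontier A" and q: "q \<in> frontier A"
    and n: "norm p = norm w" "norm q = norm w"
    and lt: "Re q < Re w" "Re w < Re p"
  shows "w \<in> frontier A"
proof -
  have "w \<in> closure A"
    using Re_upclosed_closure_mono[OF A] q n lt by (auto simp: frontier_closures)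
  moreover have "- w \<in> closure (uminus ` (- A))"
  proof (rule Re_upclosed_closure_mono[OF Re_upclosed_neg_complement[OF A]])
    show "- p \<in> closure (uminus ` (- A))"
      using p closure_injective_linear_image[OF linear_uminus inj_uminus] by (auto simp: frontier_closures)
  qed (use n lt in auto)
  then have "w \<in> closure (- A)"
    using closure_injective_linear_image[OF linear_uminus inj_uminus] by force
  ultimately show ?thesis by (simp add: frontier_closures)
qed

lemma upper_arc_Re:
  assumes "Im z > 0"
  shows "Complex (Re z) (sqrt ((norm z)\<^sup>2 - (Re z)\<^sup>2)) = z"
proof -
  have "(norm z)\<^sup>2 - (Re z)\<^sup>2 = (Im z)\<^sup>2" by (simp add: cmod_power2)
  then show ?thesis using assms by (simp add: complex_eq_iff)
qed

lemma upper_arc_subset_frontier: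
  assumes A: "Re_upclosed_on_circles A"
    and pq: "p \<in> frontier A" "q \<in> frontier A" "Im p > 0" "Im q > 0" "norm p = r" "norm q = r"
  shows "(\<lambda>x. Complex x (sqrt (r\<^sup>2 - x\<^sup>2))) ` closed_segment (Re p) (Re q) \<subseteq> frontier A \<inter> sphere 0 r"
proof (rule image_subsetI)
  fix x assume x: "x \<in> closed_segment (Re p) (Re q)"
  define w where "w = Complex x (sqrt (r\<^sup>2 - x\<^sup>2))"
  have "\<bar>x\<bar> \<le> r"
    using x abs_Re_le_cmod[of p] abs_Re_le_cmod[of q] pq(5,6) by (auto simp: closed_segment_eq_real_ivl split: if_splits)
  then have "x\<^sup>2 \<le> r\<^sup>2" by (metis abs_ge_zero power2_abs power_mono)
  then have nw: "norm w = r" using \<open>\<bar>x\<bar> \<le> r\<close> by (simp add: w_def complex_norm)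
  consider "x = Re p" | "x = Re q" | "x \<in> open_segment (Re p) (Re q)"
    using x by (auto simp: open_segment_def)
  then have "w \<in> frontier A"
  proof cases
    case 1 then show ?thesis using upper_arc_Re[of p] pq by (simp add: w_def)
  next
    case 2 then show ?thesis using upper_arc_Re[of q] pq by (simp add: w_def)
  next
    case 3
    then have "Re q < Re w \<and> Re w < Re p \<or> Re p < Re w \<and> Re w < Re q"
      by (auto simp: w_def open_segment_eq_real_ivl split: if_splits)
    then show ?thesis
      using Re_upclosed_frontier_between[OF A, where p=p and q=q and w=w]
        Re_upclosed_frontier_between[OF A, where p=q and q=p and w=w] pq nw
      by auto
  qed
  with nw show "w \<in> frontier A \<inter> sphere 0 r" by simp
qed

lemma closed_curve_preimage_near:
  fixes \<gamma> :: "real \<Rightarrow> 'a::metric_space"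
  assumes cont: "continuous_on {a..b} \<gamma>" and inj: "inj_on \<gamma> {a..<b}" and closed: "\<gamma> a = \<gamma> b"
    and t0: "t0 \<in> {a<..<b}" and "\<epsilon> > 0"
  obtains \<eta> where "\<eta> > 0" "\<And>u. u \<in> {a..b} \<Longrightarrow> dist (\<gamma> u) (\<gamma> t0) < \<eta> \<Longrightarrow> \<bar>u - t0\<bar> < \<epsilon>"
proof -
  define K where "K = {a..b} \<inter> {u. \<epsilon> \<le> \<bar>u - t0\<bar>}"
  have "compact K" unfolding K_def
    by (intro compact_Int_closed compact_Icc closed_Collect_le continuous_intros)
  then have "closed (\<gamma> ` K)"
    by (intro compact_imp_closed compact_continuous_image continuous_on_subset[OF cont]) (auto simp: K_def)
  moreover have "\<gamma> t0 \<notin> \<gamma> ` K"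
  proof
    assume "\<gamma> t0 \<in> \<gamma> ` K"
    then obtain u where u: "u \<in> K" "\<gamma> u = \<gamma> t0" by auto
    define u' where "u' = (if u = b then a else u)"
    have "u' \<in> {a..<b}" "\<gamma> u' = \<gamma> t0" using u closed t0 by (auto simp: u'_def K_def)
    then have "u' = t0" using t0 by (intro inj_onD[OF inj]) auto
    then show False using u(1) t0 \<open>\<epsilon> > 0\<close> by (auto simp: u'_def K_def split: if_splits)
  qed
  ultimately obtain \<eta> where "\<eta> > 0" and \<eta>: "ball (\<gamma> t0) \<eta> \<subseteq> - \<gamma> ` K"
    by (metis ComplI open_Compl openE)
  have "\<bar>u - t0\<bar> < \<epsilon>" if "u \<in> {a..b}" "dist (\<gamma> u) (\<gamma> t0) < \<eta>" for u
  proof (rule ccontr)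
    assume "\<not> \<bar>u - t0\<bar> < \<epsilon>"
    then have "\<gamma> u \<in> \<gamma> ` K" using that(1) by (simp add: K_def)
    moreover have "\<gamma> u \<in> ball (\<gamma> t0) \<eta>" using that(2) by (simp add: dist_commute)
    ultimately show False using \<eta> by blast
  qed
  with \<open>\<eta> > 0\<close> show ?thesis by (rule that)
qed

lemma component_curve_same_radius_near:
  fixes \<gamma> :: "real \<Rightarrow> complex"
  assumes A: "Re_upclosed_on_circles A"
    and cont: "continuous_on {a..b} \<gamma>" and inj: "inj_on \<gamma> {a..<b}" and closed: "\<gamma> a = \<gamma> b"
    and comp: "\<gamma> ` {a..b} \<in> components (frontier A)"
    and s: "s \<in> {a<..<b}" and t0: "t0 \<in> {a<..<b}" and "s \<noteq> t0"
    and up: "Im (\<gamma> s) > 0" "Im (\<gamma> t0) > 0" and same: "norm (\<gamma> s) = norm (\<gamma> t0)"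
    and "\<epsilon> > 0"
  obtains u where "u \<in> {a..b}" "u \<noteq> t0" "\<bar>u - t0\<bar> < \<epsilon>" "norm (\<gamma> u) = norm (\<gamma> t0)"
proof -
  define p q r where "p = \<gamma> s" and "q = \<gamma> t0" and "r = norm (\<gamma> t0)"
  define arc where "arc = (\<lambda>x. Complex x (sqrt (r\<^sup>2 - x\<^sup>2)))"
  define C where "C = arc ` closed_segment (Re p) (Re q)"
  have "p \<noteq> q"
  proof
    assume "p = q"
    then have "s = t0" using s t0 by (intro inj_onD[OF inj]) (auto simp: p_def q_def)
    with \<open>s \<noteq> t0\<close> show False ..
  qed
  have arc_q: "arc (Re q) = q" using upper_arc_Re[of q] up by (simp add: arc_def q_def r_def)
  have "Re p \<noteq> Re q"
  proof
    assume "Re p = Re q"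
    moreover have "norm p = norm q" using same by (simp add: p_def q_def)
    ultimately have "p = q"
      using upper_arc_Re[of p] upper_arc_Re[of q] up by (metis p_def q_def)
    with \<open>p \<noteq> q\<close> show False ..
  qed
  have arc_cont: "continuous_on UNIV arc"
    unfolding arc_def by (intro continuous_intros)
  have "p \<in> frontier A" "q \<in> frontier A"
    using in_components_subset[OF comp] s t0 by (auto simp: p_def q_def)
  then have C: "C \<subseteq> frontier A \<inter> sphere 0 r"
    unfolding C_def arc_def
    by (rule upper_arc_subset_frontier[OF A]) (use up same in \<open>auto simp: p_def q_def r_def\<close>)
  have "C \<subseteq> \<gamma> ` {a..b}"
  proof (rule components_maximal[OF comp])
    show "connected C"
      unfolding C_def by (intro connected_continuous_image continuous_on_subset[OF arc_cont]) auto
    have "q \<in> C" unfolding C_def using arc_q by (metis ends_in_segment(2) image_eqI)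
    moreover have "q \<in> \<gamma> ` {a..b}" using t0 by (auto simp: q_def)
    ultimately show "\<gamma> ` {a..b} \<inter> C \<noteq> {}" by blast
  qed (use C in auto)
  obtain \<eta> where "\<eta> > 0" and \<eta>: "\<And>u. u \<in> {a..b} \<Longrightarrow> dist (\<gamma> u) q < \<eta> \<Longrightarrow> \<bar>u - t0\<bar> < \<epsilon>"
    using closed_curve_preimage_near[OF cont inj closed t0 \<open>\<epsilon> > 0\<close>] unfolding q_def by blast
  obtain \<tau> where "\<tau> > 0" and \<tau>: "\<And>x. \<bar>x - Re q\<bar> < \<tau> \<Longrightarrow> dist (arc x) (arc (Re q)) < \<eta>"
    using arc_cont \<open>\<eta> > 0\<close> unfolding continuous_on_iff dist_real_def by blast
  have "Re q islimpt closed_segment (Re p) (Re q)"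
    using \<open>Re p \<noteq> Re q\<close> by (auto simp: closed_segment_eq_real_ivl)
  then obtain x where x: "x \<in> closed_segment (Re p) (Re q)" "x \<noteq> Re q" "\<bar>x - Re q\<bar> < \<tau>"
    using \<open>\<tau> > 0\<close> unfolding islimpt_approachable_real by blast
  have "arc x \<in> C" using x(1) by (simp add: C_def)
  with \<open>C \<subseteq> \<gamma> ` {a..b}\<close> obtain u where u: "u \<in> {a..b}" "\<gamma> u = arc x" by auto
  show ?thesis
  proof (rule that[OF u(1)])
    show "u \<noteq> t0" using u x(2) by (auto simp: arc_def q_def)
    show "\<bar>u - t0\<bar> < \<epsilon>" using \<eta>[OF u(1)] \<tau>[OF x(3)] u(2) arc_q by simp
    show "norm (\<gamma> u) = norm (\<gamma> t0)" using C \<open>arc x \<in> C\<close> u(2) by (auto simp: r_def)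
  qed
qed

lemma farthest_upper_curve_radius_deriv_nonpos:
  fixes \<gamma> :: "real \<Rightarrow> complex"
  assumes A: "Re_upclosed_on_circles A"
    and cont: "continuous_on {-\<beta>..\<beta>} \<gamma>" and inj: "inj_on \<gamma> {-\<beta>..<\<beta>}" and closed: "\<gamma> (-\<beta>) = \<gamma> \<beta>"
    and comp: "\<gamma> ` {-\<beta>..\<beta>} \<in> components (frontier A)"
    and up: "\<forall>t\<in>{0<..<\<beta>}. Im (\<gamma> t) > 0"
    and far: "\<forall>t\<in>{-\<beta>..\<beta>}. norm (\<gamma> t) \<le> norm (\<gamma> 0)"
    and t0: "t0 \<in> {0<..<\<beta>}" and der: "((\<lambda>t. norm (\<gamma> t)) has_real_derivative l) (at t0)"
  shows "l \<le> 0"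
proof (rule ccontr)
  assume "\<not> l \<le> 0"
  define \<rho> where "\<rho> = (\<lambda>t. norm (\<gamma> t))"
  obtain d1 d2 where "d1 > 0" "d2 > 0"
    and inc: "\<And>h. 0 < h \<Longrightarrow> h < d1 \<Longrightarrow> \<rho> t0 < \<rho> (t0 + h)"
    and dec: "\<And>h. 0 < h \<Longrightarrow> h < d2 \<Longrightarrow> \<rho> (t0 - h) < \<rho> t0"
    using DERIV_pos_inc_right[OF der] DERIV_pos_inc_left[OF der] \<open>\<not> l \<le> 0\<close> unfolding \<rho>_def
    by (metis not_le)
  define \<epsilon> where "\<epsilon> = min (min d1 d2) (min t0 (\<beta> - t0))"
  have \<epsilon>: "\<epsilon> > 0" "\<epsilon> \<le> d1" "\<epsilon> \<le> d2" "\<epsilon> \<le> t0" "\<epsilon> \<le> \<beta> - t0"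
    using \<open>d1 > 0\<close> \<open>d2 > 0\<close> t0 by (auto simp: \<epsilon>_def)
  have isolated: "u = t0" if "\<bar>u - t0\<bar> < \<epsilon>" "\<rho> u = \<rho> t0" for u
    using that inc[of "u - t0"] dec[of "t0 - u"]
    by (cases "u < t0"; cases "t0 < u") (use \<epsilon> in \<open>auto simp: abs_less_iff\<close>)
  define h where "h = \<epsilon> / 2"
  have h: "0 < h" "h < d1" "h < d2" "h < t0" "t0 + h < \<beta>"
    using \<epsilon> by (auto simp: h_def)
  then have "\<rho> (t0 - h) < \<rho> t0" "\<rho> t0 < \<rho> (t0 + h)" "\<rho> (t0 + h) \<le> \<rho> 0"
    using inc dec far t0 by (auto simp: \<rho>_def)
  moreover have "continuous_on {0..t0 - h} \<rho>"
    unfolding \<rho>_def by (intro continuous_intros continuous_on_subset[OF cont]) (use t0 h in auto)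
  ultimately obtain s where s: "0 \<le> s" "s \<le> t0 - h" "\<rho> s = \<rho> t0"
    using IVT2'[of \<rho> "t0 - h" "\<rho> t0" 0] h by fastforce
  have "s \<noteq> 0" using s(3) \<open>\<rho> t0 < \<rho> (t0 + h)\<close> \<open>\<rho> (t0 + h) \<le> \<rho> 0\<close> by auto
  then have s_in: "s \<in> {0<..<\<beta>}" and "s \<noteq> t0" using s h t0 by auto
  obtain u where "\<bar>u - t0\<bar> < \<epsilon>" "u \<noteq> t0" "\<rho> u = \<rho> t0"
    using component_curve_same_radius_near[OF A cont inj closed comp _ _ \<open>s \<noteq> t0\<close> _ _ _ \<epsilon>(1)]
      s_in t0 up s(3) unfolding \<rho>_def by auto
  then show False using isolated by blast
qed

subsection \<open>Orientation of a symmetric counterclockwise curve\<close>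

lemma Im_Ln_minus_ii_real:
  fixes c :: real
  assumes "c \<noteq> 0"
  shows "Im (Ln (- \<i> * of_real c)) = - sgn c * pi / 2"
proof -
  have "- \<i> * of_real c \<noteq> 0" using assms by simp
  from Im_Ln_eq_pi_half[OF this] show ?thesis using assms by (auto simp: sgn_real_def not_less)
qed

text \<open>On the closed upper half plane minus x, w \<mapsto> Ln (-\<i> (w - x)) is a primitive of 1/(w - x).\<close>
lemma Re_winding_number_upper_half_path:
  assumes g: "valid_path g" and img: "path_image g \<subseteq> {w. 0 \<le> Im w} - {x}"
    and real: "Im x = 0" "Im (pathstart g) = 0" "Im (pathfinish g) = 0"
  shows "Re (winding_number g x) = (sgn (Re (pathstart g - x)) - sgn (Re (pathfinish g - x))) / 4"
proof -
  define F where "F = (\<lambda>w. Ln (- \<i> * (w - x)))"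
  have "((\<lambda>w. 1 / (w - x)) has_contour_integral F (pathfinish g) - F (pathstart g)) g"
  proof (rule contour_integral_primitive[OF _ g img])
    fix w assume w: "w \<in> {w. 0 \<le> Im w} - {x}"
    have "- \<i> * (w - x) \<notin> \<real>\<^sub>\<le>\<^sub>0"
      using w real(1) by (auto simp: complex_nonpos_Reals_iff complex_eq_iff)
    then have "(F has_field_derivative inverse (- \<i> * (w - x)) * (- \<i>)) (at w)"
      unfolding F_def by (auto intro!: derivative_eq_intros)
    moreover have "inverse (- \<i> * (w - x)) * (- \<i>) = 1 / (w - x)"
      using w by (auto simp: field_simps)
    ultimately show "(F has_field_derivative 1 / (w - x)) (at w within {w. 0 \<le> Im w} - {x})"
      by (simp add: has_field_derivative_at_within)
  qed
  then have wn: "winding_number g x = (F (pathfinish g) - F (pathstart g)) / (2 * pi * \<i>)"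
    using winding_number_valid_path[OF g] img contour_integral_unique by fastforce
  have ImF: "Im (F z) = - sgn (Re (z - x)) * pi / 2" if "z \<in> path_image g" "Im z = 0" for z
  proof -
    have "z - x = of_real (Re (z - x))" using that(2) real(1) by (simp add: complex_eq_iff)
    moreover have "Re (z - x) \<noteq> 0" using that img real(1) by (auto simp: complex_eq_iff)
    ultimately show ?thesis unfolding F_def by (metis Im_Ln_minus_ii_real)
  qed
  have Re_div: "Re (c / (2 * pi * \<i>)) = Im c / (2 * pi)" for c
    by (simp add: Re_divide power2_eq_square)
  show ?thesis
    unfolding wn Re_div using ImF[OF pathstart_in_path_image real(2)] ImF[OF pathfinish_in_path_image real(3)]
    by (simp add: field_simps)
qed

lemma Re_winding_number_lower_half_path:
  assumes g: "valid_path g" and img: "path_image g \<subseteq> {w. Im w \<le> 0} - {x}"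
    and real: "Im x = 0" "Im (pathstart g) = 0" "Im (pathfinish g) = 0"
  shows "Re (winding_number g x) = (sgn (Re (pathfinish g - x)) - sgn (Re (pathstart g - x))) / 4"
proof -
  have cx: "cnj x = x" using real(1) by (simp add: complex_eq_iff)
  have "x \<notin> path_image g" using img by blast
  then have "winding_number (cnj \<circ> g) x = - cnj (winding_number g x)"
    using winding_number_cnj[OF valid_path_imp_path[OF g]] cx by metis
  moreover have "Re (winding_number (cnj \<circ> g) x)
      = (sgn (Re (pathstart (cnj \<circ> g) - x)) - sgn (Re (pathfinish (cnj \<circ> g) - x))) / 4"
  proof (rule Re_winding_number_upper_half_path)
    show "valid_path (cnj \<circ> g)" using g by (simp add: valid_path_cnj)
    show "path_image (cnj \<circ> g) \<subseteq> {w. 0 \<le> Im w} - {x}"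
      using img cx by (auto simp: path_image_compose)
  qed (use real in \<open>simp_all add: pathstart_compose pathfinish_compose\<close>)
  ultimately show ?thesis by (simp add: pathstart_compose pathfinish_compose field_simps)
qed

lemma cnj_in_inside:
  assumes S: "cnj ` S = S" and x: "x \<in> inside S"
  shows "cnj x \<in> inside S"
proof -
  have memS: "cnj t \<in> S \<longleftrightarrow> t \<in> S" for t
    by (metis S complex_cnj_cnj image_eqI)
  have "connected_component_set (- S) (cnj x) \<subseteq> cnj ` connected_component_set (- S) x"
  proof
    fix y assume "y \<in> connected_component_set (- S) (cnj x)"
    then obtain T where T: "connected T" "T \<subseteq> - S" "cnj x \<in> T" "y \<in> T"
      by (auto simp: connected_component_def)
    have "connected (cnj ` T)"
      by (rule connected_continuous_image[OF _ T(1)]) (intro continuous_intros)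
    moreover have "cnj ` T \<subseteq> - S" "x \<in> cnj ` T" "cnj y \<in> cnj ` T"
      using T(2-4) memS by (auto intro: image_eqI[of _ _ "cnj x"])
    ultimately have "cnj y \<in> connected_component_set (- S) x"
      by (auto simp: connected_component_def)
    then show "y \<in> cnj ` connected_component_set (- S) x"
      by (metis complex_cnj_cnj image_eqI)
  qed
  moreover have "bounded (cnj ` connected_component_set (- S) x)"
    using x by (intro bounded_linear_image bounded_linear_cnj) (auto simp: inside_def)
  ultimately have "bounded (connected_component_set (- S) (cnj x))" using bounded_subset by blast
  moreover have "cnj x \<notin> S" using x memS by (simp add: inside_def)
  ultimately show ?thesis by (simp add: inside_def)
qed

lemma symmetric_loop_real_point_winding_one:
  assumes sp: "simple_path g" and loop: "pathfinish g = pathstart g"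
    and symm: "cnj ` path_image g = path_image g"
    and z: "z \<notin> path_image g" "winding_number g z = 1"
  obtains x where "Im x = 0" "x \<notin> path_image g" "winding_number g x = 1"
proof -
  define S where "S = path_image g"
  have "z \<notin> outside S"
    using z winding_number_zero_in_outside[OF simple_path_imp_path[OF sp] loop] by (auto simp: S_def)
  then have "z \<in> inside S" using z(1) inside_Un_outside[of S] unfolding S_def by blast
  moreover have "cnj z \<in> inside S" using cnj_in_inside[OF symm] \<open>z \<in> inside S\<close> by (simp add: S_def)
  moreover have "connected (Im ` inside S)"
    using Jordan_inside_outside[OF sp loop] by (intro connected_continuous_image continuous_intros) (simp add: S_def)
  ultimately have "0 \<in> Im ` inside S"
    using connectedD_interval[of "Im ` inside S" "Im z" "Im (cnj z)" 0]
      connectedD_interval[of "Im ` inside S" "Im (cnj z)" "Im z" 0] by force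
  then obtain x where x: "x \<in> inside S" "Im x = 0" by auto
  have "winding_number g y = 1" if "y \<in> inside S" for y
  proof (rule simple_closed_path_winding_number_inside[OF sp])
    assume "\<And>y. y \<in> inside (path_image g) \<Longrightarrow> winding_number g y = 1"
    then show ?thesis using that by (simp add: S_def)
  next
    assume "\<And>y. y \<in> inside (path_image g) \<Longrightarrow> winding_number g y = -1"
    then have "winding_number g z = -1" using \<open>z \<in> inside S\<close> by (simp add: S_def)
    then show ?thesis using z(2) by simp
  qed
  moreover have "x \<notin> path_image g" using x(1) inside_no_overlap[of S] unfolding S_def by blast
  ultimately show ?thesis using that x by blast
qed

lemma image_affine_reparam:
  fixes a c :: real
  assumes "c > 0"
  shows "(\<lambda>s. f (a + c * s)) ` {0..1} = f ` {a..a + c}"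
proof -
  have "(\<lambda>s. f (a + c * s)) ` {0..1} = f ` ((\<lambda>s. c * s + a) ` {0..1})"
    by (simp add: image_image add.commute[of a])
  also have "(\<lambda>s. c * s + a) ` {0..1} = {a..a + c}"
    using assms by (subst image_affinity_atLeastAtMost) (auto simp: add.commute)
  finally show ?thesis .
qed

lemma valid_path_affine_reparam:
  fixes \<gamma> :: "real \<Rightarrow> complex"
  assumes \<gamma>': "\<And>t. (\<gamma> has_vector_derivative \<gamma>' t) (at t)" "continuous_on UNIV \<gamma>'"
  shows "valid_path (\<lambda>s. \<gamma> (a + b * s))"
proof -
  have "((\<lambda>s. \<gamma> (a + b * s)) has_vector_derivative b *\<^sub>R \<gamma>' (a + b * s)) (at s)" for s
  proof -
    have "((\<lambda>s. a + b * s) has_vector_derivative b) (at s)"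
      by (auto intro!: derivative_eq_intros simp flip: has_real_derivative_iff_has_vector_derivative)
    from vector_diff_chain_at[OF this \<gamma>'(1)] show ?thesis by (simp add: o_def)
  qed
  moreover have "continuous_on {0..1} (\<lambda>s. b *\<^sub>R \<gamma>' (a + b * s))"
    by (intro continuous_intros continuous_on_compose2[OF \<gamma>'(2)]) auto
  ultimately have "(\<lambda>s. \<gamma> (a + b * s)) C1_differentiable_on {0..1}"
    unfolding C1_differentiable_on_def by (intro exI[of _ "\<lambda>s. b *\<^sub>R \<gamma>' (a + b * s)"]) auto
  then show ?thesis unfolding valid_path_def by (rule C1_differentiable_imp_piecewise)
qed

lemma simple_path_affine_reparam:
  fixes \<gamma> :: "real \<Rightarrow> 'a::real_normed_vector"
  assumes path: "path (\<lambda>s. \<gamma> (a + c * s))" and "c > 0"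
    and inj: "inj_on \<gamma> {a..<a + c}" and closed: "\<gamma> a = \<gamma> (a + c)"
  shows "simple_path (\<lambda>s. \<gamma> (a + c * s))"
proof -
  define g where "g = (\<lambda>s. \<gamma> (a + c * s))"
  have inj_g: "inj_on g {0..<1}"
  proof (rule inj_onI)
    fix x y assume x: "x \<in> {0..<1}" and y: "y \<in> {0..<1}" and "g x = g y"
    have "c * x < c" "c * y < c" using x y \<open>c > 0\<close> by simp_all
    then have "a + c * x = a + c * y"
      using x y \<open>c > 0\<close> \<open>g x = g y\<close> by (intro inj_onD[OF inj]) (auto simp: g_def)
    then show "x = y" using \<open>c > 0\<close> by simp
  qed
  have "x = y \<or> x = 0 \<and> y = 1 \<or> x = 1 \<and> y = 0"
    if "x \<in> {0..1}" "y \<in> {0..1}" "g x = g y" for x y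
  proof -
    define x' y' where "x' = (if x = 1 then 0 else x)" and "y' = (if y = 1 then 0 else y)"
    have "g 1 = g 0" by (simp add: g_def closed)
    then have "g x' = g y'" using that(3) by (auto simp: x'_def y'_def)
    moreover have "x' \<in> {0..<1}" "y' \<in> {0..<1}" using that(1,2) by (auto simp: x'_def y'_def)
    ultimately have "x' = y'" by (rule inj_onD[OF inj_g])
    then show ?thesis by (auto simp: x'_def y'_def split: if_splits)
  qed
  then show ?thesis using path unfolding simple_path_def loop_free_def g_def by blast
qed

lemma symmetric_ccw_curve_real_point_inside:
  fixes \<gamma> :: "real \<Rightarrow> complex"
  assumes "\<beta> > 0"
    and \<gamma>': "\<And>t. (\<gamma> has_vector_derivative \<gamma>' t) (at t)" "continuous_on UNIV \<gamma>'"
    and closed: "\<gamma> (-\<beta>) = \<gamma> \<beta>" and inj: "inj_on \<gamma> {-\<beta>..<\<beta>}"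
    and symm: "\<forall>t\<in>{-\<beta>..\<beta>}. \<gamma> (-t) = cnj (\<gamma> t)"
    and ccw: "\<exists>z. z \<notin> \<gamma> ` {-\<beta>..\<beta>} \<and> winding_number (\<lambda>s. \<gamma> (-\<beta> + 2 * \<beta> * s)) z = 1"
  obtains x where "Im x = 0" "x \<notin> \<gamma> ` {-\<beta>..\<beta>}" "winding_number (\<lambda>s. \<gamma> (-\<beta> + 2 * \<beta> * s)) x = 1"
proof -
  define g where "g = (\<lambda>s. \<gamma> (-\<beta> + 2 * \<beta> * s))"
  have img: "path_image g = \<gamma> ` {-\<beta>..\<beta>}"
    unfolding path_image_def g_def using image_affine_reparam[of "2 * \<beta>" \<gamma> "-\<beta>"] \<open>\<beta> > 0\<close> by simp
  have loop: "pathfinish g = pathstart g" using closed by (simp add: g_def pathfinish_def pathstart_def)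
  have "path g" unfolding g_def by (rule valid_path_imp_path[OF valid_path_affine_reparam[OF \<gamma>']])
  then have sp: "simple_path g"
    unfolding g_def using simple_path_affine_reparam[of \<gamma> "-\<beta>" "2 * \<beta>"] \<open>\<beta> > 0\<close> inj closed by simp
  have symm_img: "cnj ` path_image g = path_image g"
    unfolding img using symm by (force intro: image_eqI[of _ cnj] image_eqI[of _ \<gamma> "- t" for t])
  obtain z where "z \<notin> path_image g" "winding_number g z = 1" using ccw img by (auto simp: g_def)
  then obtain x where x: "Im x = 0" "x \<notin> path_image g" "winding_number g x = 1"
    using symmetric_loop_real_point_winding_one[OF sp loop symm_img] by blast
  show ?thesis by (rule that[of x]) (use x img in \<open>simp_all add: g_def\<close>)
qed

lemma symmetric_ccw_curve_orientation:
  fixes \<gamma> :: "real \<Rightarrow> complex"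
  assumes "\<beta> > 0"
    and \<gamma>': "\<And>t. (\<gamma> has_vector_derivative \<gamma>' t) (at t)" "continuous_on UNIV \<gamma>'"
    and closed: "\<gamma> (-\<beta>) = \<gamma> \<beta>" and inj: "inj_on \<gamma> {-\<beta>..<\<beta>}"
    and symm: "\<forall>t\<in>{-\<beta>..\<beta>}. \<gamma> (-t) = cnj (\<gamma> t)"
    and up: "\<forall>t\<in>{0<..<\<beta>}. Im (\<gamma> t) > 0" and lo: "\<forall>t\<in>{-\<beta><..<0}. Im (\<gamma> t) < 0"
    and axis: "Im (\<gamma> 0) = 0" "Im (\<gamma> \<beta>) = 0"
    and ccw: "\<exists>z. z \<notin> \<gamma> ` {-\<beta>..\<beta>} \<and> winding_number (\<lambda>s. \<gamma> (-\<beta> + 2 * \<beta> * s)) z = 1"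
  shows "Re (\<gamma> \<beta>) < Re (\<gamma> 0)"
proof -
  obtain x where x: "Im x = 0" "x \<notin> \<gamma> ` {-\<beta>..\<beta>}"
    and wn: "winding_number (\<lambda>s. \<gamma> (-\<beta> + 2 * \<beta> * s)) x = 1"
    using symmetric_ccw_curve_real_point_inside[OF \<open>\<beta> > 0\<close> \<gamma>' closed inj symm ccw] by blast
  define lower upper where "lower = (\<lambda>s. \<gamma> (-\<beta> + \<beta> * s))" and "upper = (\<lambda>s. \<gamma> (0 + \<beta> * s))"
  have valid: "valid_path lower" "valid_path upper"
    unfolding lower_def upper_def by (intro valid_path_affine_reparam[OF \<gamma>'])+
  have img: "path_image lower = \<gamma> ` {-\<beta>..0}" "path_image upper = \<gamma> ` {0..\<beta>}"
    unfolding path_image_def lower_def upper_def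
    using image_affine_reparam[of \<beta> \<gamma> "-\<beta>"] image_affine_reparam[of \<beta> \<gamma> 0] \<open>\<beta> > 0\<close> by simp_all
  have "Im (\<gamma> t) \<le> 0" if "t \<in> {-\<beta>..0}" for t
    using that lo axis closed by (cases "t = -\<beta> \<or> t = 0") (auto simp: less_imp_le)
  then have lower_half: "path_image lower \<subseteq> {w. Im w \<le> 0} - {x}" using x(2) \<open>\<beta> > 0\<close> unfolding img by auto
  have "Im (\<gamma> t) \<ge> 0" if "t \<in> {0..\<beta>}" for t
    using that up axis by (cases "t = 0 \<or> t = \<beta>") (auto simp: less_imp_le)
  then have upper_half: "path_image upper \<subseteq> {w. 0 \<le> Im w} - {x}" using x(2) \<open>\<beta> > 0\<close> unfolding img by auto
  have "(\<lambda>s. \<gamma> (-\<beta> + 2 * \<beta> * s)) = lower +++ upper"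
    unfolding lower_def upper_def joinpaths_def by (auto simp: fun_eq_iff algebra_simps)
  moreover have "x \<notin> path_image lower" "x \<notin> path_image upper" using lower_half upper_half by auto
  ultimately have "winding_number lower x + winding_number upper x = 1"
    using wn valid closed
    by (simp add: winding_number_join valid_path_imp_path pathstart_def pathfinish_def lower_def upper_def)
  then have "Re (winding_number lower x) + Re (winding_number upper x) = 1"
    by (metis one_complex.sel(1) plus_complex.sel(1))
  moreover have "Re (winding_number lower x) = (sgn (Re (\<gamma> 0 - x)) - sgn (Re (\<gamma> \<beta> - x))) / 4"
    using Re_winding_number_lower_half_path[OF valid(1) lower_half] x(1) axis closed
    by (simp add: pathstart_def pathfinish_def lower_def)
  moreover have "Re (winding_number upper x) = (sgn (Re (\<gamma> 0 - x)) - sgn (Re (\<gamma> \<beta> - x))) / 4"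
    using Re_winding_number_upper_half_path[OF valid(2) upper_half] x(1) axis
    by (simp add: pathstart_def pathfinish_def upper_def)
  ultimately have "sgn (Re (\<gamma> 0 - x)) - sgn (Re (\<gamma> \<beta> - x)) = 2" by simp
  then show ?thesis by (auto simp: sgn_real_def split: if_splits)
qed

subsection \<open>The angle along the outer boundary curve\<close>

lemma farthest_axis_point_angle:
  fixes \<gamma> :: "real \<Rightarrow> complex"
  assumes \<gamma>': "(\<gamma> has_vector_derivative Complex (cos a) (norm (\<gamma> 0) * sin a / c) * sgn (\<gamma> 0)) (at 0)"
    and "c > 0" and axis: "Re (\<gamma> 0) > 0" "Im (\<gamma> 0) = 0"
    and "\<beta> > 0" and up: "\<forall>t\<in>{0<..<\<beta>}. Im (\<gamma> t) > 0"
    and far: "\<forall>t\<in>{-\<beta>..\<beta>}. norm (\<gamma> t) \<le> norm (\<gamma> 0)"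
    and a: "0 \<le> a" "a < 2 * pi"
  shows "a = pi / 2"
proof (rule angle_eq_pi_half[OF _ _ a])
  have "\<gamma> 0 \<noteq> 0" using axis by auto
  show "cos a = 0"
    using DERIV_local_max[OF has_real_derivative_norm_polar[OF \<gamma>' \<open>\<gamma> 0 \<noteq> 0\<close>] \<open>\<beta> > 0\<close>] far by force
  have "\<gamma> 0 = of_real (Re (\<gamma> 0))" using axis by (simp add: complex_eq_iff)
  then have "sgn (\<gamma> 0) = 1" using axis by (metis sgn_of_real sgn_pos of_real_1)
  moreover have "Im (Complex (cos a) (norm (\<gamma> 0) * sin a / c) * sgn (\<gamma> 0)) \<ge> 0"
    by (rule Im_derivative_nonneg_leaving_axis[OF \<gamma>' axis(2) \<open>\<beta> > 0\<close>]) (use up in simp)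
  ultimately show "sin a \<ge> 0"
    using \<open>c > 0\<close> \<open>\<gamma> 0 \<noteq> 0\<close> by (simp add: zero_le_divide_iff zero_le_mult_iff)
qed

lemma periodic_curve_polar_angle_mod_2pi:
  fixes \<gamma> \<gamma>' :: "real \<Rightarrow> complex"
  assumes period: "\<forall>t. \<gamma> (t + 2 * \<beta>) = \<gamma> t" and \<gamma>': "\<And>t. (\<gamma> has_vector_derivative \<gamma>' t) (at t)"
    and polar: "\<And>t. t \<in> {-\<beta>..\<beta>} \<Longrightarrow> \<gamma>' t = Complex (cos (\<alpha> t)) (norm (\<gamma> t) * sin (\<alpha> t) / c (\<gamma> t)) * sgn (\<gamma> t)"
    and "\<beta> \<ge> 0" "\<gamma> \<beta> \<noteq> 0" "c (\<gamma> \<beta>) \<noteq> 0"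
  shows "\<exists>k::int. \<alpha> (-\<beta>) = \<alpha> \<beta> + 2 * pi * of_int k"
proof (rule polar_angles_eq_mod_2pi)
  have closed: "\<gamma> (-\<beta>) = \<gamma> \<beta>" using period[rule_format, of "-\<beta>"] by simp
  have "Complex (cos (\<alpha> (-\<beta>))) (norm (\<gamma> \<beta>) * sin (\<alpha> (-\<beta>)) / c (\<gamma> \<beta>)) * sgn (\<gamma> \<beta>) = \<gamma>' (-\<beta>)"
    using polar[of "-\<beta>"] \<open>\<beta> \<ge> 0\<close> by (simp add: closed)
  also have "\<dots> = \<gamma>' \<beta>" using vector_derivative_periodic[OF period \<gamma>', of "-\<beta>"] by simp
  also have "\<dots> = Complex (cos (\<alpha> \<beta>)) (norm (\<gamma> \<beta>) * sin (\<alpha> \<beta>) / c (\<gamma> \<beta>)) * sgn (\<gamma> \<beta>)"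
    using polar[of \<beta>] \<open>\<beta> \<ge> 0\<close> by simp
  finally show "Complex (cos (\<alpha> (-\<beta>))) (norm (\<gamma> \<beta>) * sin (\<alpha> (-\<beta>)) / c (\<gamma> \<beta>)) * sgn (\<gamma> \<beta>)
      = Complex (cos (\<alpha> \<beta>)) (norm (\<gamma> \<beta>) * sin (\<alpha> \<beta>) / c (\<gamma> \<beta>)) * sgn (\<gamma> \<beta>)" .
qed (use assms(5,6) in \<open>auto simp: sgn_zero_iff\<close>)

theorem lemma4p4:
  fixes h f :: "real \<Rightarrow> real" and A :: "complex set"
    and \<gamma> :: "real \<Rightarrow> complex" and \<beta> :: real and \<alpha> :: "real \<Rightarrow> real"
  assumes h_smooth: "Cinf_on {0..} h" and h_pos: "\<forall>r>0. h r > 0"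
    and f_smooth: "Cinf_on {0..} f" and f_pos: "\<forall>r\<ge>0. f r > 0"
    and iso: "isoperimetric h f A"
    and symz: "sph_symmetrized A"
    and beta_pos: "\<beta> > 0"
    and gamma_smooth: "Cinf_on UNIV \<gamma>"
    and gamma_closed: "\<forall>t. \<gamma> (t + 2 * \<beta>) = \<gamma> t"
    and gamma_simple: "inj_on \<gamma> {-\<beta>..<\<beta>}"
    and gamma_comp: "\<gamma> ` {-\<beta>..\<beta>} \<in> components (frontier A)"
    and gamma_farthest_comp: "\<forall>z\<in>frontier A. norm z \<le> norm (\<gamma> 0)"
    and gamma_ccw: "\<exists>z. z \<notin> \<gamma> ` {-\<beta>..\<beta>} \<and> winding_number (\<lambda>s. \<gamma> (-\<beta> + 2 * \<beta> * s)) z = 1"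
    and gamma_arclength: "\<forall>t\<in>{-\<beta>..\<beta>}. gnorm h (\<gamma> t) (vector_derivative \<gamma> (at t)) = 1"
    and gamma_axis0: "Im (\<gamma> 0) = 0" and gamma_axis_beta: "Im (\<gamma> \<beta>) = 0"
    and gamma_symm: "\<forall>t\<in>{-\<beta>..\<beta>}. \<gamma> (-t) = cnj (\<gamma> t)"
    and gamma_upper: "\<forall>t\<in>{0<..<\<beta>}. Im (\<gamma> t) > 0"
    and gamma_lower: "\<forall>t\<in>{-\<beta><..<0}. Im (\<gamma> t) < 0"
    and gamma0_farthest: "\<forall>t\<in>{-\<beta>..\<beta>}. norm (\<gamma> t) \<le> norm (\<gamma> 0)"
    and avoids_origin: "\<forall>t\<in>{-\<beta>..\<beta>}. \<gamma> t \<noteq> 0"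
    and alpha_cont: "continuous_on {-\<beta>..\<beta>} \<alpha>"
    and alpha0_range: "0 \<le> \<alpha> 0" "\<alpha> 0 < 2 * pi"
    and alpha_angle: "\<forall>t\<in>{-\<beta>..\<beta>}. vector_derivative \<gamma> (at t) =
        Complex (cos (\<alpha> t)) (norm (\<gamma> t) * sin (\<alpha> t) / h (norm (\<gamma> t))) * sgn (\<gamma> t)"
  shows "\<alpha> 0 = pi / 2
    \<and> (\<exists>k::int. \<alpha> (-\<beta>) = \<alpha> \<beta> + 2 * pi * of_int k)
    \<and> (\<alpha> \<beta> = pi / 2 \<or> \<alpha> \<beta> = 3 * pi / 2)
    \<and> (\<forall>t\<in>{0..\<beta>}. pi / 2 \<le> \<alpha> t \<and> \<alpha> t \<le> 3 * pi / 2)"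
proof -
  obtain \<gamma>' where \<gamma>': "\<And>t. (\<gamma> has_vector_derivative \<gamma>' t) (at t)" "continuous_on UNIV \<gamma>'"
    using Cinf_on_UNIV_imp_C1[OF gamma_smooth] by blast
  have cont: "continuous_on {-\<beta>..\<beta>} \<gamma>"
    using \<gamma>'(1) by (meson continuous_at_imp_continuous_on has_vector_derivative_continuous)
  have closed: "\<gamma> (-\<beta>) = \<gamma> \<beta>" using gamma_closed[rule_format, of "-\<beta>"] by simp
  have polar: "\<gamma>' t = Complex (cos (\<alpha> t)) (norm (\<gamma> t) * sin (\<alpha> t) / h (norm (\<gamma> t))) * sgn (\<gamma> t)"
    if "t \<in> {-\<beta>..\<beta>}" for t
    using alpha_angle that vector_derivative_at[OF \<gamma>'(1)] by simp
  have \<rho>': "((\<lambda>t. norm (\<gamma> t)) has_real_derivative cos (\<alpha> t)) (at t)" if "t \<in> {-\<beta>..\<beta>}" for t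
    using has_real_derivative_norm_polar \<gamma>'(1) polar avoids_origin that by metis
  have "Re (\<gamma> \<beta>) < Re (\<gamma> 0)"
    by (rule symmetric_ccw_curve_orientation[OF beta_pos \<gamma>' closed gamma_simple gamma_symm
          gamma_upper gamma_lower gamma_axis0 gamma_axis_beta gamma_ccw])
  then have "Re (\<gamma> 0) > 0"
    using gamma0_farthest[rule_format, of \<beta>] beta_pos gamma_axis0 gamma_axis_beta by (simp add: cmod_eq_Re)
  moreover have "h (norm (\<gamma> 0)) > 0" using h_pos avoids_origin beta_pos by auto
  ultimately have alpha0: "\<alpha> 0 = pi / 2"
    using farthest_axis_point_angle[OF _ _ _ gamma_axis0 beta_pos gamma_upper gamma0_farthest alpha0_range]
      \<gamma>'(1)[of 0] polar[of 0] beta_pos by simp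
  have cos_beta: "cos (\<alpha> \<beta>) = 0"
    using has_real_derivative_zero_if_symmetric[OF \<rho>' beta_pos]
      periodic_symmetric_curve_radius_even[OF gamma_closed gamma_symm] beta_pos by simp
  have "cos (\<alpha> t) \<le> 0" if "t \<in> {0..\<beta>}" for t
  proof (cases "t = 0 \<or> t = \<beta>")
    case True then show ?thesis using cos_beta by (auto simp: alpha0)
  next
    case False then show ?thesis
      using farthest_upper_curve_radius_deriv_nonpos[OF sph_symmetrized_imp_Re_upclosed[OF symz]
          cont gamma_simple closed gamma_comp gamma_upper gamma0_farthest _ \<rho>'] that by simp
  qed
  then have "\<forall>t\<in>{0..\<beta>}. pi / 2 \<le> \<alpha> t \<and> \<alpha> t \<le> 3 * pi / 2"
    using continuous_angle_cos_nonpos_range[OF continuous_on_subset[OF alpha_cont] alpha0] by auto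
  moreover have "\<exists>k::int. \<alpha> (-\<beta>) = \<alpha> \<beta> + 2 * pi * of_int k"
    using periodic_curve_polar_angle_mod_2pi[where c = "\<lambda>z. h (norm z)", OF gamma_closed \<gamma>'(1) polar]
      beta_pos avoids_origin h_pos[rule_format, of "norm (\<gamma> \<beta>)"] by auto
  ultimately show ?thesis using alpha0 cos_beta cos_eq_zero_in_half_turns beta_pos by auto
qed

end
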